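(* Let $\phi$ be an MTL sentence over the alphabet $\mathcal F^0$ of nullary fluent predicates. Let $\tau=(p_1,t_1)(p_2,t_2)\cdots$ be a finite or infinite timed trace; for each $i$ let $z^{(i)}$ be the prefix of $\tau$ consisting of the first $i$ time–action pairs and $\tau^{(i)}$ the suffix with $\tau=z^{(i)}\cdot\tau^{(i)}$. Let $w$ be a t-ESG world and $\rho$ the timed word corresponding to $(w,\tau)$. Then for each $i\in\mathbb N_0$ (with $i\le|\tau|$): $$w,z^{(i)},\tau^{(i)}\models_{\text{t-ESG}}\phi \iff \rho,i\models_{\mathrm{MTL}}\phi .$$
   Context: The logic t-ESG (relevant fragment). Action standard names $\mathcal N_A$; fluent predicate symbols, in particular nullary ones $\mathcal F^0$; primitive formulas are predicate symbols applied to standard names. Timed traces are finite or infinite sequences $t_1p_1t_2p_2\cdots$ with non-decreasing $t_i\in\mathbb R_{\ge0}$ and $p_i\in\mathcal N_A$; $(p_1,t_1)\cdots(p_k,t_k)$ denotes $t_1p_1\cdots t_kp_k$; $\mathrm{time}(z)=t_k$ for such $z$ and $\mathrm{time}(\langle\rangle)=0$. A world $w$ assigns to each primitive formula and each finite trace $z$ a truth value $w[F(\vec n),z]\in\{0,1\}$ (plus values of terms and clocks, irrelevant here). Trace formulas over $\mathcal F^0$: atoms $F\in\mathcal F^0$, $\neg\phi$, $\phi\wedge\psi$, $\phi\,\mathcal U_I\,\psi$ with $I$ an open/closed/half-closed interval with natural-number (or $\infty$) endpoints. Truth for finite $z$ and (finite or infinite) $\tau$: $w,z,\tau\models F$ iff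 $w[F,z]=1$; Boolean connectives as usual; $w,z,\tau\models\phi\,\mathcal U_I\,\psi$ iff there are a trace $\tau'$ and a nonempty finite $z_1=(p_1,t_1)\cdots(p_k,t_k)$ with $\tau=z_1\tau'$, $w,zz_1,\tau'\models\psi$, $\mathrm{time}(z_1)\in\mathrm{time}(z)+I$, and for all splits $z_1=z_2z_3$ with $z_2,z_3$ nonempty sequences of time–action pairs, $w,zz_2,z_3\tau'\models\phi$. MTL (pointwise semantics): formulas over a set $P$ of propositions: $p\in P$, $\neg\phi$, $\phi\wedge\psi$, $\phi\,\mathcal U_I\,\psi$. A timed word is a finite or infinite sequence $\rho=(\rho_0,t_0)(\rho_1,t_1)\cdots$ with $\rho_i\subseteq P$, $t_0=0$, non-decreasing $t_i\in\mathbb R_{\ge0}$. $\rho,i\models p$ iff $p\in\rho_i$; Boolean connectives usual; $\rho,i\models\phi\,\mathcal U_I\,\psi$ iff there is $j$ with $i<j<|\rho|$, $\rho,j\models\psi$, $t_j-t_i\in I$, and $\rho,m\models\phi$ for all $i<m<j$. Timed word corresponding to $(w,\tau)$: $\rho=(\rho_0,0)(\rho_1,t_1)(\rho_2,t_2)\cdots$ (same length as $\tau$ plus one) with $\rho_i=\{F(\vec n)\text{ primitive formula}\mid w[F(\vec n),z^{(i)}]=1\}$, where $z^{(i)}$ is the prefix of $\tau$ with $i$ time–action pairs. *)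

theory Defs
  imports Main "HOL-Library.Extended_Nat"
begin

datatype 'e seq = Fin "'e list" | Inf "nat \<Rightarrow> 'e"

fun slen :: "'e seq \<Rightarrow> enat" where
  "slen (Fin l) = enat (length l)"
| "slen (Inf f) = \<infinity>"

fun snth :: "'e seq \<Rightarrow> nat \<Rightarrow> 'e" where
  "snth (Fin l) i = l ! i"
| "snth (Inf f) i = f i"

fun sappend :: "'e list \<Rightarrow> 'e seq \<Rightarrow> 'e seq" where
  "sappend z (Fin l) = Fin (z @ l)"
| "sappend z (Inf f) = Inf (\<lambda>n. if n < length z then z ! n else f (n - length z))"

definition sprefix :: "'e seq \<Rightarrow> nat \<Rightarrow> 'e list" where
  "sprefix s i = map (snth s) [0..<i]"

fun sdrop :: "nat \<Rightarrow> 'e seq \<Rightarrow> 'e seq" where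
  "sdrop i (Fin l) = Fin (drop i l)"
| "sdrop i (Inf f) = Inf (\<lambda>n. f (n + i))"

type_synonym 'a ttrace = "('a \<times> real) seq"

definition valid_ttrace :: "'a ttrace \<Rightarrow> bool" where
  "valid_ttrace \<tau> \<longleftrightarrow>
     (\<forall>i. enat i < slen \<tau> \<longrightarrow> 0 \<le> snd (snth \<tau> i)) \<and>
     (\<forall>i. enat (Suc i) < slen \<tau> \<longrightarrow> snd (snth \<tau> i) \<le> snd (snth \<tau> (Suc i)))"

definition ttime :: "('a \<times> real) list \<Rightarrow> real" where
  "ttime z = (if z = [] then 0 else snd (last z))"

text \<open>lower endpoint, lower closed?, upper endpoint (possibly \<infinity>), upper closed?\<close>
datatype interval = Ivl nat bool enat bool

fun in_ivl :: "real \<Rightarrow> interval \<Rightarrow> bool" where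
  "in_ivl d (Ivl l lc u uc) \<longleftrightarrow>
     (if lc then real l \<le> d else real l < d) \<and>
     (case u of \<infinity> \<Rightarrow> True | enat n \<Rightarrow> (if uc then d \<le> real n else d < real n))"

datatype 'f fml = Atom 'f | Neg "'f fml" | And "'f fml" "'f fml"
  | Until "'f fml" interval "'f fml"

text \<open>A t-ESG world (restricted to fluent truth values): primitive formulas are
  predicate symbols applied to lists of standard names; a nullary fluent F is (F, []).\<close>
type_synonym ('f, 'n, 'a) world = "('f \<times> 'n list) \<Rightarrow> ('a \<times> real) list \<Rightarrow> bool"

fun esg_sat :: "('f, 'n, 'a) world \<Rightarrow> ('a \<times> real) list \<Rightarrow> 'a ttrace \<Rightarrow> 'f fml \<Rightarrow> bool" where
  "esg_sat w z \<tau> (Atom F) \<longleftrightarrow> w (F, []) z"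
| "esg_sat w z \<tau> (Neg \<phi>) \<longleftrightarrow> \<not> esg_sat w z \<tau> \<phi>"
| "esg_sat w z \<tau> (And \<phi> \<psi>) \<longleftrightarrow> esg_sat w z \<tau> \<phi> \<and> esg_sat w z \<tau> \<psi>"
| "esg_sat w z \<tau> (Until \<phi> I \<psi>) \<longleftrightarrow>
     (\<exists>\<tau>' z1. z1 \<noteq> [] \<and> \<tau> = sappend z1 \<tau>' \<and> esg_sat w (z @ z1) \<tau>' \<psi> \<and>
        in_ivl (ttime z1 - ttime z) I \<and>
        (\<forall>z2 z3. z1 = z2 @ z3 \<and> z2 \<noteq> [] \<and> z3 \<noteq> [] \<longrightarrow>
            esg_sat w (z @ z2) (sappend z3 \<tau>') \<phi>))"

type_synonym 'p tword = "('p set \<times> real) seq"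

fun mtl_sat :: "'p tword \<Rightarrow> nat \<Rightarrow> 'p fml \<Rightarrow> bool" where
  "mtl_sat \<rho> i (Atom p) \<longleftrightarrow> p \<in> fst (snth \<rho> i)"
| "mtl_sat \<rho> i (Neg \<phi>) \<longleftrightarrow> \<not> mtl_sat \<rho> i \<phi>"
| "mtl_sat \<rho> i (And \<phi> \<psi>) \<longleftrightarrow> mtl_sat \<rho> i \<phi> \<and> mtl_sat \<rho> i \<psi>"
| "mtl_sat \<rho> i (Until \<phi> I \<psi>) \<longleftrightarrow>
     (\<exists>j. i < j \<and> enat j < slen \<rho> \<and> mtl_sat \<rho> j \<psi> \<and>
        in_ivl (snd (snth \<rho> j) - snd (snth \<rho> i)) I \<and>
        (\<forall>m. i < m \<and> m < j \<longrightarrow> mtl_sat \<rho> m \<phi>))"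

definition corr_letter :: "('f, 'n, 'a) world \<Rightarrow> 'a ttrace \<Rightarrow> nat \<Rightarrow> ('f \<times> 'n list) set \<times> real" where
  "corr_letter w \<tau> i = ({P. w P (sprefix \<tau> i)}, ttime (sprefix \<tau> i))"

fun corr_word :: "('f, 'n, 'a) world \<Rightarrow> 'a ttrace \<Rightarrow> ('f \<times> 'n list) tword" where
  "corr_word w (Fin l) = Fin (map (corr_letter w (Fin l)) [0..<Suc (length l)])"
| "corr_word w (Inf f) = Inf (corr_letter w (Inf f))"

definition nullary :: "'f fml \<Rightarrow> ('f \<times> 'n list) fml" where
  "nullary \<phi> = map_fml (\<lambda>F. (F, [])) \<phi>"

end

theory Submission
  imports Defs
begin

(* A decomposition of the suffix sdrop i \<tau> into a nonempty finite part z followed by \<tau>' is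
   determined by the length of z, so it corresponds to a position j > i of \<tau>, with
   z = \<tau>[i..j) and \<tau>' = sdrop j \<tau>; likewise the splits of z into two nonempty parts
   correspond to the positions strictly between i and j. Under this correspondence the t-ESG
   until evaluated after the prefix of length i is exactly the pointwise MTL until at position i
   of the corresponding timed word, whose j-th letter records the fluents and the time after the
   prefix of length j. The equivalence then follows by induction on the formula. *)

lemma sprefix_Fin: "j \<le> length l \<Longrightarrow> sprefix (Fin l) j = take j l"
  by (simp add: sprefix_def list_eq_iff_nth_eq)

lemma take_sprefix: "i \<le> j \<Longrightarrow> take i (sprefix \<tau> j) = sprefix \<tau> i"
  by (simp add: sprefix_def take_map)

lemma length_sprefix [simp]: "length (sprefix \<tau> j) = j"
  by (simp add: sprefix_def)

lemma sprefix_append_drop: "i \<le> j \<Longrightarrow> sprefix \<tau> i @ drop i (sprefix \<tau> j) = sprefix \<tau> j"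
  by (metis append_take_drop_id take_sprefix)

lemma drop_sprefix_append:
  "i \<le> m \<Longrightarrow> m \<le> j \<Longrightarrow> drop i (sprefix \<tau> m) @ drop m (sprefix \<tau> j) = drop i (sprefix \<tau> j)"
  by (metis drop_append length_sprefix sprefix_append_drop diff_is_0_eq drop_0)

lemma ttime_drop: "i < length z \<Longrightarrow> ttime (drop i z) = ttime z"
  by (auto simp: ttime_def)

lemma sdrop_split:
  assumes "i \<le> j" "enat j \<le> slen \<tau>"
  shows "sdrop i \<tau> = sappend (drop i (sprefix \<tau> j)) (sdrop j \<tau>)"
proof (cases \<tau>)
  case (Fin l)
  then have "j \<le> length l" using assms(2) by simp
  have "drop i (take j l) = take (j - i) (drop i l)" "drop j l = drop (j - i) (drop i l)"
    using assms(1) by (simp_all add: take_drop)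
  then have "drop i l = drop i (take j l) @ drop j l" by (metis append_take_drop_id)
  then show ?thesis
    using Fin \<open>j \<le> length l\<close> by (simp add: sprefix_Fin)
next
  case (Inf f)
  with assms show ?thesis
    by (auto simp: fun_eq_iff sprefix_def add.commute)
qed

lemma slen_sappend: "slen (sappend z s) = enat (length z) + slen s"
  by (cases s) auto

lemma slen_sdrop: "slen (sdrop i s) = slen s - enat i"
  by (cases s) auto

lemma sappend_eq_sappend_iff:
  assumes "length z = length z'"
  shows "sappend z s = sappend z' s' \<longleftrightarrow> z = z' \<and> s = s'"
proof
  assume eq: "sappend z s = sappend z' s'"
  show "z = z' \<and> s = s'"
  proof (cases s; cases s')
    fix f g assume "s = Inf f" "s' = Inf g"
    with eq have fg: "(\<lambda>n. if n < length z then z ! n else f (n - length z)) =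
                      (\<lambda>n. if n < length z' then z' ! n else g (n - length z'))"
      by simp
    have "z = z'"
    proof (rule nth_equalityI)
      fix k assume "k < length z" then show "z ! k = z' ! k"
        using fun_cong[OF fg, of k] assms by simp
    qed (rule assms)
    moreover have "f = g"
    proof
      fix n show "f n = g n" using fun_cong[OF fg, of "n + length z"] assms by simp
    qed
    ultimately show ?thesis using \<open>s = Inf f\<close> \<open>s' = Inf g\<close> by simp
  qed (use eq assms in simp_all)
qed simp

lemma sdrop_eq_sappendD:
  assumes "enat i \<le> slen \<tau>" "sdrop i \<tau> = sappend z \<tau>'"
  defines "j \<equiv> i + length z"
  shows "enat j \<le> slen \<tau> \<and> z = drop i (sprefix \<tau> j) \<and> \<tau>' = sdrop j \<tau>"
proof -
  have "enat j \<le> slen \<tau>"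
    using assms(1) arg_cong[OF assms(2), of slen] unfolding j_def
    by (cases "slen \<tau>"; cases "slen \<tau>'") (auto simp: slen_sappend slen_sdrop)
  moreover have "sdrop i \<tau> = sappend (drop i (sprefix \<tau> j)) (sdrop j \<tau>)"
    using calculation by (rule sdrop_split[rotated]) (simp add: j_def)
  moreover have "length z = length (drop i (sprefix \<tau> j))"
    by (simp add: j_def)
  ultimately show ?thesis
    using assms(2) sappend_eq_sappend_iff by metis
qed

lemma all_split_drop_sprefix_iff:
  assumes "i \<le> j"
  shows "(\<forall>z2 z3. drop i (sprefix \<tau> j) = z2 @ z3 \<and> z2 \<noteq> [] \<and> z3 \<noteq> [] \<longrightarrow> P z2 z3) \<longleftrightarrow>
         (\<forall>m. i < m \<and> m < j \<longrightarrow> P (drop i (sprefix \<tau> m)) (drop m (sprefix \<tau> j)))"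
proof
  assume all_split: "\<forall>z2 z3. drop i (sprefix \<tau> j) = z2 @ z3 \<and> z2 \<noteq> [] \<and> z3 \<noteq> [] \<longrightarrow> P z2 z3"
  show "\<forall>m. i < m \<and> m < j \<longrightarrow> P (drop i (sprefix \<tau> m)) (drop m (sprefix \<tau> j))"
  proof (intro allI impI)
    fix m assume m: "i < m \<and> m < j"
    then have "drop i (sprefix \<tau> j) = drop i (sprefix \<tau> m) @ drop m (sprefix \<tau> j)"
      by (simp add: drop_sprefix_append)
    moreover have "drop i (sprefix \<tau> m) \<noteq> []" "drop m (sprefix \<tau> j) \<noteq> []"
      using m by (simp_all flip: length_0_conv)
    ultimately show "P (drop i (sprefix \<tau> m)) (drop m (sprefix \<tau> j))"
      using all_split by blast
  qed
next
  assume all_m: "\<forall>m. i < m \<and> m < j \<longrightarrow> P (drop i (sprefix \<tau> m)) (drop m (sprefix \<tau> j))"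
  show "\<forall>z2 z3. drop i (sprefix \<tau> j) = z2 @ z3 \<and> z2 \<noteq> [] \<and> z3 \<noteq> [] \<longrightarrow> P z2 z3"
  proof (intro allI impI)
    fix z2 z3
    assume split: "drop i (sprefix \<tau> j) = z2 @ z3 \<and> z2 \<noteq> [] \<and> z3 \<noteq> []"
    define m where "m = i + length z2"
    then have len: "length z2 = length (drop i (sprefix \<tau> m))" by simp
    have "length z2 + length z3 = j - i"
      using arg_cong[OF split[THEN conjunct1], of length] by simp
    moreover have "0 < length z2" "0 < length z3"
      using split by auto
    ultimately have m: "i < m" "m < j"
      unfolding m_def using assms by linarith+
    then have "z2 @ z3 = drop i (sprefix \<tau> m) @ drop m (sprefix \<tau> j)"
      using split drop_sprefix_append[of i m j \<tau>] by simp
    with len have "z2 = drop i (sprefix \<tau> m)" "z3 = drop m (sprefix \<tau> j)"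
      by (simp_all add: append_eq_append_conv)
    with m all_m show "P z2 z3" by blast
  qed
qed

lemma ex_sdrop_eq_sappend_iff:
  assumes "enat i \<le> slen \<tau>"
  shows "(\<exists>\<tau>' z. z \<noteq> [] \<and> sdrop i \<tau> = sappend z \<tau>' \<and> P z \<tau>') \<longleftrightarrow>
         (\<exists>j. i < j \<and> enat j \<le> slen \<tau> \<and> P (drop i (sprefix \<tau> j)) (sdrop j \<tau>))"
proof
  assume "\<exists>\<tau>' z. z \<noteq> [] \<and> sdrop i \<tau> = sappend z \<tau>' \<and> P z \<tau>'"
  then obtain \<tau>' z where z: "z \<noteq> []" "sdrop i \<tau> = sappend z \<tau>'" "P z \<tau>'"
    by blast
  define j where "j = i + length z"
  with sdrop_eq_sappendD[OF assms z(2)] have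
    "enat j \<le> slen \<tau>" "z = drop i (sprefix \<tau> j)" "\<tau>' = sdrop j \<tau>"
    by simp_all
  moreover have "i < j"
    using z(1) by (simp add: j_def)
  ultimately show "\<exists>j. i < j \<and> enat j \<le> slen \<tau> \<and> P (drop i (sprefix \<tau> j)) (sdrop j \<tau>)"
    using z(3) by blast
next
  assume "\<exists>j. i < j \<and> enat j \<le> slen \<tau> \<and> P (drop i (sprefix \<tau> j)) (sdrop j \<tau>)"
  then obtain j where j: "i < j" "enat j \<le> slen \<tau>" "P (drop i (sprefix \<tau> j)) (sdrop j \<tau>)"
    by blast
  then have "drop i (sprefix \<tau> j) \<noteq> []" "sdrop i \<tau> = sappend (drop i (sprefix \<tau> j)) (sdrop j \<tau>)"
    using sdrop_split[of i j \<tau>] by (simp_all flip: length_0_conv)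
  with j(3) show "\<exists>\<tau>' z. z \<noteq> [] \<and> sdrop i \<tau> = sappend z \<tau>' \<and> P z \<tau>'"
    by blast
qed

lemma esg_sat_Until_sprefix:
  assumes "enat i \<le> slen \<tau>"
  shows "esg_sat w (sprefix \<tau> i) (sdrop i \<tau>) (Until \<phi> I \<psi>) \<longleftrightarrow>
    (\<exists>j. i < j \<and> enat j \<le> slen \<tau> \<and> esg_sat w (sprefix \<tau> j) (sdrop j \<tau>) \<psi> \<and>
       in_ivl (ttime (sprefix \<tau> j) - ttime (sprefix \<tau> i)) I \<and>
       (\<forall>m. i < m \<and> m < j \<longrightarrow> esg_sat w (sprefix \<tau> m) (sdrop m \<tau>) \<phi>))"
  unfolding esg_sat.simps ex_sdrop_eq_sappend_iff[OF assms]
  by (simp cong: conj_cong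
      add: all_split_drop_sprefix_iff sprefix_append_drop ttime_drop sdrop_split[symmetric])

lemma slen_corr_word: "slen (corr_word w \<tau>) = eSuc (slen \<tau>)"
  by (cases \<tau>) (simp_all add: eSuc_enat)

lemma snth_corr_word: "enat j \<le> slen \<tau> \<Longrightarrow> snth (corr_word w \<tau>) j = corr_letter w \<tau> j"
  by (cases \<tau>) (simp_all del: upt_Suc)

lemma mtl_sat_Until_corr_word:
  assumes "enat i \<le> slen \<tau>"
  shows "mtl_sat (corr_word w \<tau>) i (Until \<phi> I \<psi>) \<longleftrightarrow>
    (\<exists>j. i < j \<and> enat j \<le> slen \<tau> \<and> mtl_sat (corr_word w \<tau>) j \<psi> \<and>
       in_ivl (ttime (sprefix \<tau> j) - ttime (sprefix \<tau> i)) I \<and>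
       (\<forall>m. i < m \<and> m < j \<longrightarrow> mtl_sat (corr_word w \<tau>) m \<phi>))"
  using assms
  by (simp cong: conj_cong add: slen_corr_word snth_corr_word corr_letter_def)

lemma nullary_simps [simp]:
  "nullary (Atom F) = Atom (F, [])"
  "nullary (Neg \<phi>) = Neg (nullary \<phi>)"
  "nullary (And \<phi> \<psi>) = And (nullary \<phi>) (nullary \<psi>)"
  "nullary (Until \<phi> I \<psi>) = Until (nullary \<phi>) I (nullary \<psi>)"
  by (simp_all add: nullary_def)

lemma esg_sat_iff_mtl_sat_corr_word:
  assumes "enat i \<le> slen \<tau>"
  shows "esg_sat w (sprefix \<tau> i) (sdrop i \<tau>) \<phi> \<longleftrightarrow>
         mtl_sat (corr_word w \<tau>) i (nullary \<phi> :: ('f \<times> 'n list) fml)"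
  using assms
proof (induction \<phi> arbitrary: i)
  case (Atom F)
  then show ?case by (simp add: snth_corr_word corr_letter_def)
next
  case (Until \<phi> I \<psi>)
  have "(\<forall>m. i < m \<and> m < j \<longrightarrow> esg_sat w (sprefix \<tau> m) (sdrop m \<tau>) \<phi>) \<longleftrightarrow>
        (\<forall>m. i < m \<and> m < j \<longrightarrow> mtl_sat (corr_word w \<tau>) m (nullary \<phi> :: ('f \<times> 'n list) fml))"
    if "enat j \<le> slen \<tau>" for j
    using that Until.IH(1) by (meson enat_ord_simps(2) less_imp_le order_trans)
  with Until.prems Until.IH(2) show ?case
    unfolding esg_sat_Until_sprefix[OF Until.prems] nullary_simps
      mtl_sat_Until_corr_word[OF Until.prems]
    by blast
qed simp_all

theorem mainTheorem9:
  fixes \<phi> :: "'f fml" and \<tau> :: "'a ttrace" and w :: "('f, 'n, 'a) world" and i :: nat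
  assumes "valid_ttrace \<tau>"
    and "enat i \<le> slen \<tau>"
  shows "esg_sat w (sprefix \<tau> i) (sdrop i \<tau>) \<phi> \<longleftrightarrow>
         mtl_sat (corr_word w \<tau>) i (nullary \<phi> :: ('f \<times> 'n list) fml)"
  using assms(2) by (rule esg_sat_iff_mtl_sat_corr_word)

end
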